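(* Let $n\geq 2$ and let $[n]=U\sqcup A$ be a partition with $U=\{i_1<i_2<\cdots<i_L\}$ nonempty. Let $\bar x_1,\dots,\bar x_n,\bar y_1,\dots,\bar y_n\in\mathbb{R}^3$ be given. Consider the problem \[ \min \sum_{i=1}^{n-1} \left(\|x_i - x_{i+1}\|^2 + \|y_i - y_{i+1}\|^2\right), \] where $(x_i,y_i)=(\bar x_i,\bar y_i)$ is fixed for $i\in U$, and for each $i\in A$ the variable $(x_i,y_i)$ ranges over $\{(\bar x_i,\bar y_i),(\bar y_i,\bar x_i)\}$. Encode a feasible point by signs $s_i\in\{1,-1\}$, where $s_i=1$ if $(x_i,y_i)=(\bar x_i,\bar y_i)$ and $s_i=-1$ if $(x_i,y_i)=(\bar y_i,\bar x_i)$ (so $s_i=1$ for $i\in U$), and set $w_{i,i+1}=(\bar x_i-\bar y_i)^T(\bar x_{i+1}-\bar y_{i+1})$ for $1\le i\le n-1$. Put $i_0:=1$ and $i_{L+1}:=n$. Then an optimal solution $s^*$ of this problem is obtained as follows, where $\operatorname{sgn}$ is the sign function and $\operatorname{sgn}(0)$ may be taken to be either $1$ or $-1$: (1) For the last chunk ($\ell=L$): $s^*_{i_\ell}=1$ and $s^*_{i+1}=\operatorname{sgn}(w_{i,i+1})s^*_i$ for $i=i_\ell,i_\ell+1,\dots,i_{\ell+1}-1$. (2) For the first chunk ($\ell=0$): $s^*_{i_{\ell+1}}=1$ and $s^*_i=\operatorname{sgn}(w_{i,i+1})s^*_{i+1}$ for $i=i_{\ell+1}-1,i_{\ell+1}-2,\dots,i_\ell$.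 (3) For any other chunk ($1\le \ell\le L-1$): let $k$ be an index with $i_\ell\le k\le i_{\ell+1}-1$ minimizing $|w_{k,k+1}|$. Then $s^*_{i_\ell}=1$ and $s^*_{i+1}=\operatorname{sgn}(w_{i,i+1})s^*_i$ for $i=i_\ell,i_\ell+1,\dots,k-1$; and $s^*_{i_{\ell+1}}=1$ and $s^*_i=\operatorname{sgn}(w_{i,i+1})s^*_{i+1}$ for $i=i_{\ell+1}-1,i_{\ell+1}-2,\dots,k+1$.
   Context: This is the symmetry-breaking ("clustering") step for estimated pairs of homologous bead positions $(\bar x_i,\bar y_i)$, $i=1,\dots,n$: pairs indexed by $U$ are unambiguous (fixed order), pairs indexed by $A$ are ambiguous (may be swapped). The $\ell$-th chunk consists of the indices from $i_\ell$ to $i_{\ell+1}$, and the objective splits as a sum over chunks of $\sum_{i=i_\ell}^{i_{\ell+1}-1}\left(\|x_i - x_{i+1}\|^2 + \|y_i - y_{i+1}\|^2\right)$. *)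

theory Defs
  imports "HOL-Analysis.Analysis"
begin

definition conf :: "(nat \<Rightarrow> real^3) \<Rightarrow> (nat \<Rightarrow> real^3) \<Rightarrow> (nat \<Rightarrow> real) \<Rightarrow> nat \<Rightarrow> (real^3) \<times> (real^3)" where
  "conf xb yb s i = (if s i = 1 then (xb i, yb i) else (yb i, xb i))"

definition objective :: "nat \<Rightarrow> (nat \<Rightarrow> real^3) \<Rightarrow> (nat \<Rightarrow> real^3) \<Rightarrow> (nat \<Rightarrow> real) \<Rightarrow> real" where
  "objective n xb yb s =
     (\<Sum>i=1..n-1. (norm (fst (conf xb yb s i) - fst (conf xb yb s (i+1))))\<^sup>2
                 + (norm (snd (conf xb yb s i) - snd (conf xb yb s (i+1))))\<^sup>2)"

definition feasible :: "nat \<Rightarrow> nat set \<Rightarrow> (nat \<Rightarrow> real) \<Rightarrow> bool" where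
  "feasible n U s \<longleftrightarrow> (\<forall>i\<in>{1..n}. s i = 1 \<or> s i = -1) \<and> (\<forall>i\<in>U. s i = 1)"

definition wgt :: "(nat \<Rightarrow> real^3) \<Rightarrow> (nat \<Rightarrow> real^3) \<Rightarrow> nat \<Rightarrow> real" where
  "wgt xb yb i = (xb i - yb i) \<bullet> (xb (i+1) - yb (i+1))"

definition ipt :: "nat \<Rightarrow> nat set \<Rightarrow> nat \<Rightarrow> nat" where
  "ipt n U l = (if l = 0 then 1 else if l = card U + 1 then n
                else sorted_list_of_set U ! (l - 1))"

text \<open>b = sgn(w) * a, where sgn(0) may be chosen as 1 or -1 (independently at each use).\<close>
definition sgn_step :: "real \<Rightarrow> real \<Rightarrow> real \<Rightarrow> bool" where
  "sgn_step w a b \<longleftrightarrow> (\<exists>\<sigma>\<in>{1,-1::real}. (w \<noteq> 0 \<longrightarrow> \<sigma> = sgn w) \<and> b = \<sigma> * a)"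

end

theory Submission
  imports Defs
begin

text \<open>For signs \<open>s i \<in> {1, -1}\<close> the cost of the edge \<open>(i, i+1)\<close> is a constant minus
  \<open>s i * s (i+1) * w i\<close>, so the problem is to maximise the alignment
  \<open>\<Sum> s i * s (i+1) * w i\<close>, which splits over the chunks because \<open>s = 1\<close> on \<open>U\<close>.
  Every term is at most \<open>\<bar>w i\<bar>\<close>. In the first and last chunk only one end is fixed and the
  greedy signs attain the bound on every edge. In a middle chunk both ends are fixed, and the
  greedy signs attain it on every edge except the weakest one \<open>k\<close>: a competitor \<open>t\<close> can do
  better only at \<open>k\<close>, but then \<open>s i * t i\<close>, which agrees at both ends of the chunk, changes at
  \<open>k\<close> and hence also at a second edge \<open>j\<close>, where \<open>t\<close> loses \<open>2 * \<bar>w j\<bar> \<ge> 2 * \<bar>w k\<bar>\<close>.\<close>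

lemma abs_eq_1_iff: "\<bar>x :: real\<bar> = 1 \<longleftrightarrow> x = 1 \<or> x = -1"
  by auto

lemma sgn_step_commute: "sgn_step w a b \<Longrightarrow> sgn_step w b a"
  unfolding sgn_step_def by (auto simp: sgn_if)

lemma sgn_step_abs_eq: "sgn_step w a b \<Longrightarrow> \<bar>b\<bar> = \<bar>a\<bar>"
  unfolding sgn_step_def by (auto simp: abs_mult)

lemma sgn_step_mult_eq_abs:
  assumes "sgn_step w a b" "\<bar>a\<bar> = 1"
  shows "a * b * w = \<bar>w\<bar>"
proof -
  obtain \<sigma> where \<sigma>: "\<sigma> \<in> {1, -1}" "w \<noteq> 0 \<longrightarrow> \<sigma> = sgn w" "b = \<sigma> * a"
    using assms(1) unfolding sgn_step_def by blast
  have "a * a = 1" using assms(2) by (auto simp: abs_eq_1_iff)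
  then have "a * b * w = \<sigma> * w" using \<sigma>(3) by (simp add: algebra_simps)
  also have "\<dots> = \<bar>w\<bar>" using \<sigma>(1,2) by (cases "w = 0") (auto simp: sgn_if)
  finally show ?thesis .
qed

lemma unit_mult_le_abs:
  fixes c d w :: real
  assumes "\<bar>c\<bar> = 1" "\<bar>d\<bar> = 1"
  shows "c * d * w \<le> \<bar>w\<bar>"
  using abs_ge_self[of "c * d * w"] assms by (simp add: abs_mult)

lemma unit_mult_eq_if:
  fixes a b c d :: real
  assumes "\<bar>a\<bar> = 1" "\<bar>b\<bar> = 1" "\<bar>c\<bar> = 1" "\<bar>d\<bar> = 1"
  shows "c * d = (if a * c = b * d then a * b else - (a * b))"
  using assms by (auto simp: abs_eq_1_iff)

lemma stepwise_const:
  assumes "\<forall>j\<in>{a..<b}. r (Suc j) = r j" "i \<in> {a..b}"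
  shows "r i = r a"
proof -
  have "a \<le> i" "i \<le> b" using assms(2) by auto
  then show ?thesis
  proof (induction i rule: dec_induct)
    case (step i)
    then show ?case using assms(1) by simp
  qed simp
qed

lemma another_change_step:
  assumes k: "k \<in> {a..<b}" and ends: "r a = r b" and change: "r (Suc k) \<noteq> r k"
  shows "\<exists>j\<in>{a..<b} - {k}. r (Suc j) \<noteq> r j"
proof (rule ccontr)
  assume "\<not> ?thesis"
  then have "\<forall>j\<in>{a..<k}. r (Suc j) = r j" "\<forall>j\<in>{Suc k..<b}. r (Suc j) = r j"
    using k by auto
  then have "r k = r a" "r b = r (Suc k)"
    using stepwise_const[of a k r k] stepwise_const[of "Suc k" b r b] k by auto
  then show False using ends change by simp
qed

definition alignment :: "(nat \<Rightarrow> real) \<Rightarrow> (nat \<Rightarrow> real) \<Rightarrow> nat \<Rightarrow> nat \<Rightarrow> real" where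
  "alignment W s a b = (\<Sum>i=a..<b. s i * s (Suc i) * W i)"

definition chunk_optimal :: "(nat \<Rightarrow> real) \<Rightarrow> nat set \<Rightarrow> (nat \<Rightarrow> real) \<Rightarrow> nat \<Rightarrow> nat \<Rightarrow> bool" where
  "chunk_optimal W U s a b \<longleftrightarrow> (\<forall>i\<in>{a..b}. \<bar>s i\<bar> = 1) \<and>
     (\<forall>t. (\<forall>i\<in>{a..b}. \<bar>t i\<bar> = 1) \<and> (\<forall>i\<in>U. t i = 1) \<longrightarrow> alignment W t a b \<le> alignment W s a b)"

lemma linked_chunk_unit:
  assumes links: "\<forall>i\<in>{a..<b}. sgn_step (W i) (s i) (s (Suc i))"
    and m: "m \<in> {a..b}" "\<bar>s m\<bar> = 1"
  shows "\<forall>i\<in>{a..b}. \<bar>s i\<bar> = 1"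
proof -
  have "\<forall>j\<in>{a..<b}. \<bar>s (Suc j)\<bar> = \<bar>s j\<bar>" using links sgn_step_abs_eq by blast
  then show ?thesis using stepwise_const[of a b "\<lambda>j. \<bar>s j\<bar>"] m by metis
qed

lemma linked_chunk_optimal:
  assumes links: "\<forall>i\<in>{a..<b}. sgn_step (W i) (s i) (s (Suc i))"
    and m: "m \<in> {a..b}" "s m = 1"
  shows "chunk_optimal W U s a b"
proof -
  have s_unit: "\<forall>i\<in>{a..b}. \<bar>s i\<bar> = 1" using linked_chunk_unit[OF links] m by simp
  have "alignment W t a b \<le> alignment W s a b" if t_unit: "\<forall>i\<in>{a..b}. \<bar>t i\<bar> = 1" for t
    unfolding alignment_def
  proof (rule sum_mono)
    fix i assume "i \<in> {a..<b}"
    then show "t i * t (Suc i) * W i \<le> s i * s (Suc i) * W i"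
      using unit_mult_le_abs sgn_step_mult_eq_abs links s_unit t_unit by simp
  qed
  then show ?thesis using s_unit unfolding chunk_optimal_def by blast
qed

lemma forward_chunk_optimal:
  assumes "a \<le> b" "s a = 1" "\<forall>i. a \<le> i \<and> i < b \<longrightarrow> sgn_step (W i) (s i) (s (i + 1))"
  shows "chunk_optimal W U s a b"
  using assms by (intro linked_chunk_optimal[of a b W s a]) auto

lemma backward_chunk_optimal:
  assumes "a \<le> b" "s b = 1" "\<forall>i. a \<le> i \<and> i < b \<longrightarrow> sgn_step (W i) (s (i + 1)) (s i)"
  shows "chunk_optimal W U s a b"
  using assms sgn_step_commute by (intro linked_chunk_optimal[of a b W s b]) auto

lemma broken_chunk_alignment_max:
  assumes k: "k \<in> {a..<b}" and k_min: "\<forall>j\<in>{a..<b}. \<bar>W k\<bar> \<le> \<bar>W j\<bar>"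
    and links: "\<forall>i\<in>{a..<b} - {k}. sgn_step (W i) (s i) (s (Suc i))"
    and s_unit: "\<forall>i\<in>{a..b}. \<bar>s i\<bar> = 1" and t_unit: "\<forall>i\<in>{a..b}. \<bar>t i\<bar> = 1"
    and ends: "s a * t a = s b * t b"
  shows "alignment W t a b \<le> alignment W s a b"
proof -
  let ?g = "\<lambda>u i. u i * u (Suc i) * W i"
  have t_le: "?g t i \<le> \<bar>W i\<bar>" and s_ge: "- \<bar>W i\<bar> \<le> ?g s i" if "i \<in> {a..<b}" for i
    using that s_unit t_unit unit_mult_le_abs[of "- s i" "s (Suc i)" "W i"] unit_mult_le_abs by auto
  have s_eq: "?g s i = \<bar>W i\<bar>" if "i \<in> {a..<b} - {k}" for i
    using that links s_unit sgn_step_mult_eq_abs by simp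
  have t_prod: "t i * t (Suc i)
      = (if s i * t i = s (Suc i) * t (Suc i) then s i * s (Suc i) else - (s i * s (Suc i)))"
    if "i \<in> {a..<b}" for i
    using that s_unit t_unit by (intro unit_mult_eq_if) auto
  show ?thesis
  proof (cases "?g t k \<le> ?g s k")
    case True
    show ?thesis unfolding alignment_def
      by (rule sum_mono) (use True t_le s_eq in \<open>metis Diff_iff empty_iff insert_iff\<close>)
  next
    case False
    then have "s (Suc k) * t (Suc k) \<noteq> s k * t k" using t_prod[OF k] by auto
    then obtain j where j: "j \<in> {a..<b} - {k}" "s (Suc j) * t (Suc j) \<noteq> s j * t j"
      using another_change_step[OF k, of "\<lambda>i. s i * t i"] ends by blast
    then have "?g t j = - \<bar>W j\<bar>" using t_prod[of j] s_eq[OF j(1)] by auto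
    then have pair: "?g t j + ?g t k \<le> ?g s j + ?g s k"
      using t_le[OF k] s_ge[OF k] s_eq[OF j(1)] k_min j(1) by force
    have rest: "sum (?g t) ({a..<b} - {j, k}) \<le> sum (?g s) ({a..<b} - {j, k})"
      by (rule sum_mono) (use t_le s_eq in auto)
    have split: "sum (?g u) {a..<b} = sum (?g u) ({a..<b} - {j, k}) + (?g u j + ?g u k)" for u
      using sum.subset_diff[of "{j, k}" "{a..<b}" "?g u"] j(1) k by auto
    show ?thesis unfolding alignment_def split[of s] split[of t] using pair rest by linarith
  qed
qed

lemma broken_chunk_optimal:
  assumes k: "k \<in> {a..<b}" and k_min: "\<forall>j\<in>{a..<b}. \<bar>W k\<bar> \<le> \<bar>W j\<bar>"
    and forward: "\<forall>i. a \<le> i \<and> i < k \<longrightarrow> sgn_step (W i) (s i) (s (i + 1))"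
    and backward: "\<forall>i. k + 1 \<le> i \<and> i < b \<longrightarrow> sgn_step (W i) (s (i + 1)) (s i)"
    and ends: "a \<in> U" "b \<in> U" "s a = 1" "s b = 1"
  shows "chunk_optimal W U s a b"
proof -
  have links: "\<forall>i\<in>{a..<b} - {k}. sgn_step (W i) (s i) (s (Suc i))"
  proof
    fix i assume "i \<in> {a..<b} - {k}"
    then have "a \<le> i \<and> i < k \<or> Suc k \<le> i \<and> i < b" by auto
    then show "sgn_step (W i) (s i) (s (Suc i))" using forward backward sgn_step_commute by auto
  qed
  have "\<forall>i\<in>{a..k}. \<bar>s i\<bar> = 1" "\<forall>i\<in>{Suc k..b}. \<bar>s i\<bar> = 1"
    using linked_chunk_unit[of a k W s a] linked_chunk_unit[of "Suc k" b W s b] links ends k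
    by auto
  then have s_unit: "\<forall>i\<in>{a..b}. \<bar>s i\<bar> = 1" by (metis atLeastAtMost_iff not_less_eq_eq)
  show ?thesis
    unfolding chunk_optimal_def using broken_chunk_alignment_max[OF k k_min links s_unit] s_unit ends
    by simp
qed

lemma swap_cost:
  fixes a b c d :: "'a :: real_inner"
  shows "(norm (a - d))\<^sup>2 + (norm (b - c))\<^sup>2
       = (norm (a - c))\<^sup>2 + (norm (b - d))\<^sup>2 + 2 * ((a - b) \<bullet> (c - d))"
  by (simp add: power2_norm_eq_inner inner_diff_left inner_diff_right inner_commute algebra_simps)

lemma pair_cost_sign_form:
  assumes "\<bar>s i\<bar> = 1" "\<bar>s (Suc i)\<bar> = 1"
  shows "(norm (fst (conf xb yb s i) - fst (conf xb yb s (Suc i))))\<^sup>2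
       + (norm (snd (conf xb yb s i) - snd (conf xb yb s (Suc i))))\<^sup>2
     = (norm (xb i - xb (Suc i)))\<^sup>2 + (norm (yb i - yb (Suc i)))\<^sup>2
       + (1 - s i * s (Suc i)) * wgt xb yb i"
proof -
  consider "s (Suc i) = s i" | "s i = 1" "s (Suc i) = -1" | "s i = -1" "s (Suc i) = 1"
    using assms unfolding abs_eq_1_iff by fastforce
  then show ?thesis
  proof cases
    case 1
    then show ?thesis using assms by (auto simp: conf_def abs_eq_1_iff)
  next
    case 2
    then show ?thesis
      using swap_cost[where a = "xb i" and b = "yb i" and c = "xb (Suc i)" and d = "yb (Suc i)"]
      by (simp add: conf_def wgt_def)
  next
    case 3
    then show ?thesis
      using swap_cost[where a = "xb i" and b = "yb i" and c = "xb (Suc i)" and d = "yb (Suc i)"]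
      by (simp add: conf_def wgt_def add.commute)
  qed
qed

lemma objective_sign_form:
  assumes "\<forall>i\<in>{1..n}. \<bar>s i\<bar> = 1"
  shows "objective n xb yb s
       = objective n xb yb (\<lambda>_. 1) + (\<Sum>i=1..n-1. wgt xb yb i) - alignment (wgt xb yb) s 1 n"
proof -
  have "objective n xb yb s = (\<Sum>i=1..n-1. (norm (xb i - xb (Suc i)))\<^sup>2 + (norm (yb i - yb (Suc i)))\<^sup>2
      + (1 - s i * s (Suc i)) * wgt xb yb i)"
    unfolding objective_def by (rule sum.cong) (use assms pair_cost_sign_form in auto)
  moreover have "objective n xb yb (\<lambda>_. 1)
      = (\<Sum>i=1..n-1. (norm (xb i - xb (Suc i)))\<^sup>2 + (norm (yb i - yb (Suc i)))\<^sup>2)"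
    by (simp add: objective_def conf_def)
  moreover have "alignment (wgt xb yb) s 1 n = (\<Sum>i=1..n-1. s i * s (Suc i) * wgt xb yb i)"
    unfolding alignment_def by (rule sum.cong) auto
  ultimately show ?thesis
    by (simp add: sum.distrib sum_subtractf left_diff_distrib)
qed

lemma feasible_unit: "feasible n U t \<Longrightarrow> i \<in> {1..n} \<Longrightarrow> \<bar>t i\<bar> = 1"
  unfolding feasible_def by (auto simp: abs_eq_1_iff)

lemma sum_chunks:
  fixes f :: "nat \<Rightarrow> nat"
  assumes "mono_on {..M} f"
  shows "(\<Sum>l<M. sum g {f l..<f (Suc l)}) = sum g {f 0..<f M}"
  using assms
proof (induction M)
  case (Suc M)
  have IH: "(\<Sum>l<M. sum g {f l..<f (Suc l)}) = sum g {f 0..<f M}"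
    using Suc.IH mono_on_subset[OF Suc.prems] by auto
  have "f 0 \<le> f M" "f M \<le> f (Suc M)" using mono_onD[OF Suc.prems] by auto
  then show ?case
    unfolding sum.lessThan_Suc IH by (rule sum.atLeastLessThan_concat)
qed simp

lemma chunk_cover:
  fixes f :: "nat \<Rightarrow> nat"
  assumes "mono_on {..M} f" "i \<in> {f 0..f M}" "0 < M"
  shows "\<exists>l<M. i \<in> {f l..f (Suc l)}"
  using assms
proof (induction M)
  case (Suc M)
  show ?case
  proof (cases "0 < M \<and> i \<le> f M")
    case True
    then obtain l where "l < M" "i \<in> {f l..f (Suc l)}"
      using Suc.IH mono_on_subset[OF Suc.prems(1)] Suc.prems(2) by auto
    then show ?thesis using less_SucI by blast
  next
    case False
    then have "f M \<le> i" using Suc.prems(2) by (cases "M = 0") auto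
    then show ?thesis using Suc.prems(2) by auto
  qed
qed simp

lemma optimal_if_chunks_optimal:
  fixes f :: "nat \<Rightarrow> nat"
  assumes f_mono: "mono_on {..M} f" and f_ends: "f 0 = 1" "f M = n" and M_pos: "0 < M"
    and chunks: "\<forall>l<M. chunk_optimal (wgt xb yb) U s (f l) (f (Suc l))"
    and s_U: "\<forall>i\<in>U. s i = 1"
  shows "feasible n U s \<and> (\<forall>t. feasible n U t \<longrightarrow> objective n xb yb s \<le> objective n xb yb t)"
proof -
  have chunk_sub: "{f l..f (Suc l)} \<subseteq> {1..n}" if "l < M" for l
    using mono_onD[OF f_mono, of 0 l] mono_onD[OF f_mono, of "Suc l" M] f_ends that by auto
  have s_unit: "\<forall>i\<in>{1..n}. \<bar>s i\<bar> = 1"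
  proof
    fix i assume "i \<in> {1..n}"
    then obtain l where "l < M" "i \<in> {f l..f (Suc l)}"
      using chunk_cover[OF f_mono, of i] f_ends M_pos by auto
    then show "\<bar>s i\<bar> = 1" using chunks unfolding chunk_optimal_def by blast
  qed
  then have feasible: "feasible n U s" using s_U unfolding feasible_def abs_eq_1_iff by blast
  have alignment_chunks:
    "alignment W u 1 n = (\<Sum>l<M. alignment W u (f l) (f (Suc l)))" for W u
    using sum_chunks[OF f_mono, where g = "\<lambda>i. u i * u (Suc i) * W i"] f_ends
    unfolding alignment_def by simp
  have "objective n xb yb s \<le> objective n xb yb t" if t: "feasible n U t" for t
  proof -
    have t_unit: "\<forall>i\<in>{1..n}. \<bar>t i\<bar> = 1" using t feasible_unit by blast
    have "alignment (wgt xb yb) t 1 n \<le> alignment (wgt xb yb) s 1 n"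
      unfolding alignment_chunks
    proof (rule sum_mono)
      fix l assume "l \<in> {..<M}"
      then show "alignment (wgt xb yb) t (f l) (f (Suc l)) \<le> alignment (wgt xb yb) s (f l) (f (Suc l))"
        using chunks chunk_sub t_unit t unfolding chunk_optimal_def feasible_def by blast
    qed
    then show ?thesis
      using objective_sign_form[OF s_unit, of xb yb] objective_sign_form[OF t_unit, of xb yb] by linarith
  qed
  with feasible show ?thesis by blast
qed

lemma ipt_image:
  assumes "finite U"
  shows "ipt n U ` {1..card U} = U"
proof -
  let ?xs = "sorted_list_of_set U"
  have "ipt n U ` {1..card U} = ipt n U ` Suc ` {0..<length ?xs}"
    using assms by (simp add: image_Suc_atLeastLessThan atLeastLessThanSuc_atLeastAtMost)
  also have "\<dots> = nth ?xs ` {0..<length ?xs}"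
    unfolding image_image by (rule image_cong) (auto simp: ipt_def)
  also have "\<dots> = U"
    using assms by (simp add: nth_image)
  finally show ?thesis .
qed

lemma ipt_mono:
  assumes "U \<subseteq> {1..n}" "U \<noteq> {}"
  shows "mono_on {..Suc (card U)} (ipt n U)"
proof (rule mono_onI)
  fix l l' assume l: "l \<in> {..Suc (card U)}" "l' \<in> {..Suc (card U)}" "l \<le> l'"
  have fin: "finite U" using assms(1) finite_subset by blast
  have "1 \<le> n" using assms by auto
  have ipt_range: "ipt n U m \<in> {1..n}" if "m \<le> Suc (card U)" for m
  proof (cases "m \<in> {1..card U}")
    case True
    then have "ipt n U m \<in> U" using ipt_image[OF fin, of n] by blast
    then show ?thesis using assms(1) by blast
  next
    case False
    then have "m = 0 \<or> m = Suc (card U)" using that by auto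
    then show ?thesis using \<open>1 \<le> n\<close> by (auto simp: ipt_def)
  qed
  consider "l = 0" | "l' = Suc (card U)" | "1 \<le> l" "l' \<le> card U" using l by fastforce
  then show "ipt n U l \<le> ipt n U l'"
  proof cases
    case 1
    then show ?thesis using ipt_range[of l'] l by (simp add: ipt_def)
  next
    case 2
    then show ?thesis using ipt_range[of l] l by (simp add: ipt_def)
  next
    case 3
    then show ?thesis using l(3) fin by (simp add: ipt_def sorted_nth_mono)
  qed
qed

theorem lemma4p1:
  fixes n :: nat and U :: "nat set" and xb yb :: "nat \<Rightarrow> real^3" and s :: "nat \<Rightarrow> real"
  assumes n2: "n \<ge> 2"
    and U_sub: "U \<subseteq> {1..n}" and U_ne: "U \<noteq> {}"
    and last_chunk:
      "s (ipt n U (card U)) = 1 \<and>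
       (\<forall>i. ipt n U (card U) \<le> i \<and> i < ipt n U (card U + 1) \<longrightarrow>
            sgn_step (wgt xb yb i) (s i) (s (i+1)))"
    and first_chunk:
      "s (ipt n U 1) = 1 \<and>
       (\<forall>i. ipt n U 0 \<le> i \<and> i < ipt n U 1 \<longrightarrow>
            sgn_step (wgt xb yb i) (s (i+1)) (s i))"
    and middle_chunks:
      "\<forall>l. 1 \<le> l \<and> l \<le> card U - 1 \<longrightarrow>
         (\<exists>k. ipt n U l \<le> k \<and> k < ipt n U (l+1) \<and>
              (\<forall>j. ipt n U l \<le> j \<and> j < ipt n U (l+1) \<longrightarrow> \<bar>wgt xb yb k\<bar> \<le> \<bar>wgt xb yb j\<bar>) \<and>
              s (ipt n U l) = 1 \<and>
              (\<forall>i. ipt n U l \<le> i \<and> i < k \<longrightarrow> sgn_step (wgt xb yb i) (s i) (s (i+1))) \<and>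
              s (ipt n U (l+1)) = 1 \<and>
              (\<forall>i. k + 1 \<le> i \<and> i < ipt n U (l+1) \<longrightarrow> sgn_step (wgt xb yb i) (s (i+1)) (s i)))"
  shows "feasible n U s \<and> (\<forall>t. feasible n U t \<longrightarrow> objective n xb yb s \<le> objective n xb yb t)"
proof -
  define L f W where "L = card U" and "f = ipt n U" and "W = wgt xb yb"
  note last = last_chunk[folded L_def f_def W_def] and first = first_chunk[folded f_def W_def]
    and middle = middle_chunks[folded L_def f_def W_def]
  have fin: "finite U" using U_sub finite_subset by blast
  have f_mono: "mono_on {..Suc L} f" using ipt_mono[OF U_sub U_ne] by (simp add: f_def L_def)
  have f_U: "f ` {1..L} = U" using ipt_image[OF fin] by (simp add: f_def L_def)
  have s_U: "s (f l) = 1" if "l \<in> {1..L}" for l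
    using that last middle by (cases "l = L") auto
  have chunks: "\<forall>l<Suc L. chunk_optimal W U s (f l) (f (Suc l))"
  proof (intro allI impI)
    fix l assume "l < Suc L"
    then have l: "l \<le> L" by simp
    have f_le: "f l \<le> f (Suc l)" using mono_onD[OF f_mono] l by simp
    consider "l = 0" | "l = L" | "l \<in> {1..<L}" using l by fastforce
    then show "chunk_optimal W U s (f l) (f (Suc l))"
    proof cases
      case 1
      then show ?thesis using backward_chunk_optimal first f_le by simp
    next
      case 2
      then show ?thesis using forward_chunk_optimal last f_le by simp
    next
      case 3
      then have "1 \<le> l \<and> l \<le> L - 1" by auto
      with middle obtain k where "k \<in> {f l..<f (Suc l)}" "\<forall>j\<in>{f l..<f (Suc l)}. \<bar>W k\<bar> \<le> \<bar>W j\<bar>"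
        "\<forall>i. f l \<le> i \<and> i < k \<longrightarrow> sgn_step (W i) (s i) (s (i + 1))"
        "\<forall>i. k + 1 \<le> i \<and> i < f (Suc l) \<longrightarrow> sgn_step (W i) (s (i + 1)) (s i)"
        by auto
      moreover have "f l \<in> U" "f (Suc l) \<in> U" using f_U 3 by auto
      ultimately show ?thesis using broken_chunk_optimal s_U 3 by simp
    qed
  qed
  have f_ends: "f 0 = 1" "f (Suc L) = n" by (simp_all add: f_def L_def ipt_def)
  have "\<forall>i\<in>U. s i = 1" using s_U f_U by blast
  then show ?thesis
    using optimal_if_chunks_optimal[OF f_mono f_ends _ chunks[unfolded W_def]] by simp
qed

end
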